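(* Let $i\in[1:p]$ be fixed. Assume that for all $\emptyset\subsetneq u\subsetneq[1:p]$ and $m\in[1:M]$, $\widehat W_u(m)$ is computed with cost $\kappa N_O$ as $\widehat W_u(m)=\frac1{N_O}\sum_{n=1}^{N_O}\widehat W_u^{(n)}(m)$ with i.i.d. $(\widehat W_u^{(n)}(m))_n$, all $(\widehat W_u(m))_{u,m}$ independent, and $\mathrm{E}(\widehat W_u^{(1)}(1))=W_u$ (unbiased). Then, to minimize over $N_O$ and $M$ the variance of $\widehat\eta_i$ (given by the random-permutation $W$-aggregation procedure) with a fixed cost $\kappa MN_O(p-1)=\kappa C(p-1)$ for some $C\in\mathbb{N}^*$, one must choose $N_O=1$ and $M=C$.
   Context: Setting: $\mathbf{X}=(X_1,\dots,X_p)$, $Y=f(\mathbf{X})$, $f\in L^2(\mathbb{P}_\mathbf{X})$; $W_u$ is $V_u=\mathrm{Var}(\mathrm{E}(Y|\mathbf{X}_u))$ or $E_u=\mathrm{E}(\mathrm{Var}(Y|\mathbf{X}_{-u}))$, $W_\emptyset=0$, $W_{[1:p]}=\mathrm{Var}(Y)$ known. For a permutation $\sigma$, $P_i(\sigma)=\{\sigma(j):j\in[1:\sigma^{-1}(i)-1]\}$. Random-permutation procedure: with $\sigma_1,\dots,\sigma_M$ i.i.d. uniform on the permutations of $[1:p]$, $\widehat\eta_i=\frac{1}{M\mathrm{Var}(Y)}\sum_{m=1}^M(\widehat W_{P_i(\sigma_m)\cup\{i\}}(m)-\widehat W_{P_i(\sigma_m)}(m))$, each $\widehat W_u(m)$ having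 accuracy $N_u=N_O$ for all $u$. *)

theory Defs
  imports "HOL-Probability.Probability" "HOL-Combinatorics.Permutations"
begin

definition perms :: "nat \<Rightarrow> (nat \<Rightarrow> nat) set" where
  "perms p = {s. s permutes {1..p}}"

definition Pset :: "nat \<Rightarrow> (nat \<Rightarrow> nat) \<Rightarrow> nat set" where
  "Pset i s = s ` {1..<inv s i}"

definition gen_alg :: "'b measure \<Rightarrow> ('b \<Rightarrow> nat \<Rightarrow> real) \<Rightarrow> nat set \<Rightarrow> 'b measure" where
  "gen_alg Q X u = vimage_algebra (space Q) (\<lambda>w. restrict (X w) u) (PiM u (\<lambda>_. borel))"

definition Yof :: "((nat \<Rightarrow> real) \<Rightarrow> real) \<Rightarrow> ('b \<Rightarrow> nat \<Rightarrow> real) \<Rightarrow> 'b \<Rightarrow> real" where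
  "Yof f X = (\<lambda>w. f (X w))"

definition Vu :: "'b measure \<Rightarrow> ('b \<Rightarrow> nat \<Rightarrow> real) \<Rightarrow> ((nat \<Rightarrow> real) \<Rightarrow> real) \<Rightarrow> nat set \<Rightarrow> real" where
  "Vu Q X f u = prob_space.variance Q (real_cond_exp Q (gen_alg Q X u) (Yof f X))"

definition Eu :: "nat \<Rightarrow> 'b measure \<Rightarrow> ('b \<Rightarrow> nat \<Rightarrow> real) \<Rightarrow> ((nat \<Rightarrow> real) \<Rightarrow> real) \<Rightarrow> nat set \<Rightarrow> real" where
  "Eu p Q X f u = prob_space.expectation Q
     (real_cond_exp Q (gen_alg Q X ({1..p} - u))
        (\<lambda>w. (Yof f X w - real_cond_exp Q (gen_alg Q X ({1..p} - u)) (Yof f X) w)^2))"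

text \<open>Estimator of W_u for the m-th permutation with accuracy N:
  W_emptyset = 0 and W_[1:p] = Var(Y) are known; otherwise the empirical mean of
  the N i.i.d. samples Z u m 1, ..., Z u m N.\<close>
definition What :: "nat \<Rightarrow> real \<Rightarrow> (nat set \<Rightarrow> nat \<Rightarrow> nat \<Rightarrow> 'a \<Rightarrow> real)
     \<Rightarrow> nat \<Rightarrow> nat set \<Rightarrow> nat \<Rightarrow> 'a \<Rightarrow> real" where
  "What p VY Z N u m w =
     (if u = {} then 0 else if u = {1..p} then VY
      else (1 / real N) * (\<Sum>n=1..N. Z u m n w))"

definition eta_hat :: "nat \<Rightarrow> real \<Rightarrow> (nat \<Rightarrow> 'a \<Rightarrow> (nat \<Rightarrow> nat))
     \<Rightarrow> (nat set \<Rightarrow> nat \<Rightarrow> nat \<Rightarrow> 'a \<Rightarrow> real) \<Rightarrow> nat \<Rightarrow> nat \<Rightarrow> nat \<Rightarrow> 'a \<Rightarrow> real" where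
  "eta_hat p VY sig Z i N M w =
     (1 / (real M * VY)) * (\<Sum>m=1..M.
        What p VY Z N (Pset i (sig m w) \<union> {i}) m w - What p VY Z N (Pset i (sig m w)) m w)"

text \<open>Index set of the independent family: permutations sigma_m (m >= 1) and
  samples Z u m n for proper nonempty u, m >= 1, n >= 1.\<close>
definition idx :: "nat \<Rightarrow> (nat + nat set \<times> nat \<times> nat) set" where
  "idx p = Inl ` {1..} \<union>
     Inr ` {(u, m, n). u \<subseteq> {1..p} \<and> u \<noteq> {} \<and> u \<noteq> {1..p} \<and> 1 \<le> m \<and> 1 \<le> n}"

end

(* The estimator is 1/(M Var Y) times a sum of M summands D_m, one per permutation sigma_m.
   Distinct summands depend on disjoint blocks of the independent family, so they are
   uncorrelated with a common mean mu and second moment; hence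
   Var(eta) = (E D^2 - mu^2) / (M (Var Y)^2).  Splitting D according to the value s of
   the uniform sigma_m, the summand is the exact increment of s plus the mean of N i.i.d.
   sampled increments, so E D^2 - mu^2 = A + B / N, where A >= 0 is the variance of the
   mean increments over s and B the average variance of one sampled increment.  Under
   M N = C the variance is (A N + B) / (C (Var Y)^2), smallest for N = 1. *)

theory Submission
  imports Defs
begin

lemma sum_sum_if_eq:
  fixes x y :: real
  assumes "finite I"
  shows "(\<Sum>m\<in>I. \<Sum>m'\<in>I. if m = m' then x else y) = card I * x + (card I * card I - card I) * y"
proof -
  have row: "(\<Sum>m'\<in>I. if m = m' then x else y) = card I * y + (x - y)" if "m \<in> I" for m
  proof -
    have "(\<Sum>m'\<in>I. if m = m' then x else y) = (\<Sum>m'\<in>I. y + (if m = m' then x - y else 0))"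
      by (intro sum.cong) auto
    then show ?thesis
      using that assms by (simp add: sum.distrib)
  qed
  have "(\<Sum>m\<in>I. \<Sum>m'\<in>I. if m = m' then x else y) = (\<Sum>m\<in>I. card I * y + (x - y))"
    by (intro sum.cong refl row)
  then show ?thesis
    by (simp add: algebra_simps)
qed

lemma (in prob_space) variance_scaled_sum_uncorrelated:
  fixes D :: "'i \<Rightarrow> 'a \<Rightarrow> real"
  assumes I: "finite I"
    and mean: "\<And>m. m \<in> I \<Longrightarrow> has_bochner_integral M (D m) \<mu>"
    and prod: "\<And>m m'. m \<in> I \<Longrightarrow> m' \<in> I \<Longrightarrow>
       has_bochner_integral M (\<lambda>w. D m w * D m' w) (if m = m' then \<rho> else \<mu>\<^sup>2)"
    and g: "\<And>w. w \<in> space M \<Longrightarrow> g w = c * (\<Sum>m\<in>I. D m w)"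
  shows "variance g = c\<^sup>2 * card I * (\<rho> - \<mu>\<^sup>2)"
proof -
  have "has_bochner_integral M (\<lambda>w. c * (\<Sum>m\<in>I. D m w)) (c * (\<Sum>m\<in>I. \<mu>))"
    by (intro has_bochner_integral_mult_right has_bochner_integral_sum mean)
  then have g1: "has_bochner_integral M g (c * (\<Sum>m\<in>I. \<mu>))"
    by (subst has_bochner_integral_cong[OF refl g refl])
  have sq: "(g w)\<^sup>2 = c\<^sup>2 * (\<Sum>m\<in>I. \<Sum>m'\<in>I. D m w * D m' w)" if "w \<in> space M" for w
    using g[OF that] by (simp add: power_mult_distrib power2_eq_square sum_product)
  have "has_bochner_integral M (\<lambda>w. c\<^sup>2 * (\<Sum>m\<in>I. \<Sum>m'\<in>I. D m w * D m' w))
      (c\<^sup>2 * (\<Sum>m\<in>I. \<Sum>m'\<in>I. if m = m' then \<rho> else \<mu>\<^sup>2))"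
    by (intro has_bochner_integral_mult_right has_bochner_integral_sum prod)
  then have g2: "has_bochner_integral M (\<lambda>w. (g w)\<^sup>2)
      (c\<^sup>2 * (\<Sum>m\<in>I. \<Sum>m'\<in>I. if m = m' then \<rho> else \<mu>\<^sup>2))"
    by (subst has_bochner_integral_cong[OF refl sq refl])
  have "variance g = expectation (\<lambda>w. (g w)\<^sup>2) - (expectation g)\<^sup>2"
    using g1 g2 by (intro variance_eq) (auto simp: has_bochner_integral_iff)
  also have "\<dots> = c\<^sup>2 * card I * (\<rho> - \<mu>\<^sup>2)"
    using g1 g2 I by (simp add: has_bochner_integral_iff sum_sum_if_eq power2_eq_square algebra_simps)
  finally show ?thesis .
qed

lemma has_bochner_integral_congI:
  assumes "has_bochner_integral M f x" "\<And>w. w \<in> space M \<Longrightarrow> f w = g w" "x = y"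
  shows "has_bochner_integral M g y"
  using assms has_bochner_integral_cong by blast

lemma cost_constrained_variance_le:
  fixes A B v :: real and N M C :: nat
  assumes A: "0 \<le> A" and N: "1 \<le> N" and C: "M * N = C"
  shows "(1 / (real C * v))\<^sup>2 * real C * (A + B) \<le> (1 / (real M * v))\<^sup>2 * real M * (A + B / real N)"
proof (cases "M = 0 \<or> v = 0")
  case True
  then show ?thesis using C by auto
next
  case False
  have "(1 / (real M * v))\<^sup>2 * real M * (A + B / real N) = (1 / (real C * v))\<^sup>2 * real C * (A * real N + B)"
    using False N C[symmetric] by (simp add: field_simps power2_eq_square)
  moreover have "A + B \<le> A * real N + B"
    using A N by (simp add: mult_le_cancel_left1)
  ultimately show ?thesis
    by (simp add: mult_left_mono)
qed

lemma Pset_subset: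
  assumes "s permutes {1..p}" and "i \<in> {1..p}"
  shows "Pset i s \<subseteq> {1..p}"
proof -
  have "inv s i \<in> {1..p}"
    using permutes_in_image[OF permutes_inv[OF assms(1)]] assms(2) by simp
  then have "{1..<inv s i} \<subseteq> {1..p}"
    by auto
  then show ?thesis
    unfolding Pset_def using permutes_image[OF assms(1)] by blast
qed

lemma not_in_Pset:
  assumes "s permutes S"
  shows "i \<notin> Pset i s"
proof
  assume "i \<in> Pset i s"
  then obtain j where "j \<in> {1..<inv s i}" "i = s j"
    by (auto simp: Pset_def)
  moreover from this have "inv s i = j"
    using permutes_inv_eq[OF assms] by simp
  ultimately show False
    by simp
qed

lemma finite_perms: "finite (perms p)"
  unfolding perms_def by (rule finite_permutations) simp

lemma id_in_perms: "id \<in> perms p"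
  unfolding perms_def by (simp add: permutes_id)

section \<open>Moments of permutation indicators and samples\<close>

definition proper_set :: "nat \<Rightarrow> nat set \<Rightarrow> bool" where
  "proper_set p u \<longleftrightarrow> u \<subseteq> {1..p} \<and> u \<noteq> {} \<and> u \<noteq> {1..p}"

lemma Inr_in_idx_iff: "Inr (u, m, n) \<in> idx p \<longleftrightarrow> proper_set p u \<and> 1 \<le> m \<and> 1 \<le> n"
  unfolding idx_def proper_set_def by auto

lemma Inl_in_idx_iff: "Inl m \<in> idx p \<longleftrightarrow> 1 \<le> m"
  unfolding idx_def by auto

text \<open>Samples exist only for proper sets; extending them by 0 lets every set
  \<open>u \<subseteq> [1:p]\<close> be handled uniformly.\<close>

definition sample :: "nat \<Rightarrow> (nat set \<Rightarrow> nat \<Rightarrow> nat \<Rightarrow> 'a \<Rightarrow> real) \<Rightarrow> nat set \<Rightarrow> nat \<Rightarrow> nat \<Rightarrow> 'a \<Rightarrow> real" where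
  "sample p Z u m n w = (if proper_set p u then Z u m n w else 0)"

lemma sample_proper: "proper_set p u \<Longrightarrow> sample p Z u m n = Z u m n"
  by (simp add: sample_def fun_eq_iff)

definition perm_ind :: "(nat \<Rightarrow> 'a \<Rightarrow> nat \<Rightarrow> nat) \<Rightarrow> nat \<Rightarrow> (nat \<Rightarrow> nat) \<Rightarrow> 'a \<Rightarrow> real" where
  "perm_ind sig m s w = (if sig m w = s then 1 else 0)"

text \<open>One real-valued family indexed like the independent family, so that
  \<^const>\<open>prob_space.indep_vars\<close> applies to indicators of permutations and transformed samples at once.\<close>

definition sample_family :: "(nat \<Rightarrow> 'a \<Rightarrow> nat \<Rightarrow> nat) \<Rightarrow> (nat set \<Rightarrow> nat \<Rightarrow> nat \<Rightarrow> 'a \<Rightarrow> real)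
   \<Rightarrow> (nat \<Rightarrow> nat \<Rightarrow> nat) \<Rightarrow> (nat + nat set \<times> nat \<times> nat \<Rightarrow> real \<Rightarrow> real)
   \<Rightarrow> nat + nat set \<times> nat \<times> nat \<Rightarrow> 'a \<Rightarrow> real" where
  "sample_family sig Z s h k w =
     (case k of Inl m \<Rightarrow> perm_ind sig m (s m) w | Inr (u, m, n) \<Rightarrow> h k (Z u m n w))"

lemma sample_family_Inl [simp]: "sample_family sig Z s h (Inl m) = perm_ind sig m (s m)"
  by (simp add: sample_family_def fun_eq_iff)

lemma sample_family_Inr [simp]:
  "sample_family sig Z s h (Inr (u, m, n)) = (\<lambda>w. h (Inr (u, m, n)) (Z u m n w))"
  by (simp add: sample_family_def fun_eq_iff)

lemma preimages_subset_preimages: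
  assumes "\<And>A. A \<in> S \<Longrightarrow> Q (\<phi> A) \<and> f -` A \<inter> X = g -` \<phi> A \<inter> X"
  shows "{f -` A \<inter> X | A. A \<in> S} \<subseteq> {g -` B \<inter> X | B. Q B}"
  using assms by blast

lemma prod_Inl_Inr:
  "finite Ms \<Longrightarrow> finite T \<Longrightarrow>
   (\<Prod>k\<in>Inl ` Ms \<union> Inr ` T. F k) = (\<Prod>m\<in>Ms. F (Inl m)) * (\<Prod>t\<in>T. F (Inr t))"
  by (subst prod.union_disjoint) (auto simp: prod.reindex)

locale mc_design = prob_space Pr for Pr :: "'a measure" +
  fixes p :: nat and sig :: "nat \<Rightarrow> 'a \<Rightarrow> (nat \<Rightarrow> nat)"
    and Z :: "nat set \<Rightarrow> nat \<Rightarrow> nat \<Rightarrow> 'a \<Rightarrow> real"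
  assumes sig_rv: "\<And>m. 1 \<le> m \<Longrightarrow> sig m \<in> Pr \<rightarrow>\<^sub>M count_space (perms p)"
    and sig_unif: "\<And>m. 1 \<le> m \<Longrightarrow>
       distr Pr (count_space (perms p)) (sig m) = uniform_count_measure (perms p)"
    and Z_rv: "\<And>u m n. Inr (u, m, n) \<in> idx p \<Longrightarrow> Z u m n \<in> borel_measurable Pr"
    and Z_id: "\<And>u m n. Inr (u, m, n) \<in> idx p \<Longrightarrow>
       distr Pr borel (Z u m n) = distr Pr borel (Z u 1 1)"
    and Z_L2: "\<And>u. Inr (u, 1, 1) \<in> idx p \<Longrightarrow> integrable Pr (\<lambda>w. (Z u 1 1 w)\<^sup>2)"
    and indep: "indep_sets
       (\<lambda>k. case k of
          Inl m \<Rightarrow> {sig m -` A \<inter> space Pr | A. A \<subseteq> perms p}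
        | Inr (u, m, n) \<Rightarrow> {Z u m n -` B \<inter> space Pr | B. B \<in> sets borel})
       (idx p)"
begin

lemma sig_in_perms: "1 \<le> m \<Longrightarrow> w \<in> space Pr \<Longrightarrow> sig m w \<in> perms p"
  using measurable_space[OF sig_rv] by fastforce

lemma perm_ind_measurable: "1 \<le> m \<Longrightarrow> perm_ind sig m s \<in> borel_measurable Pr"
  unfolding perm_ind_def[abs_def]
  by (rule measurable_compose[OF sig_rv, where g="\<lambda>t. if t = s then 1 else 0"]) simp_all

lemma sample_family_indep:
  assumes h: "\<And>k. h k \<in> borel_measurable borel"
  shows "indep_vars (\<lambda>_. borel) (sample_family sig Z s h) (idx p)"
  unfolding indep_vars_def2
proof safe
  fix k assume k: "k \<in> idx p"
  show "random_variable borel (sample_family sig Z s h k)"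
  proof (cases k)
    case (Inl m)
    then show ?thesis using k perm_ind_measurable by (simp add: Inl_in_idx_iff)
  next
    case (Inr a)
    then obtain u m n where a: "k = Inr (u, m, n)" by (cases a) auto
    show ?thesis
      unfolding a sample_family_Inr by (rule measurable_compose[OF Z_rv h]) (use k a in auto)
  qed
next
  show "indep_sets (\<lambda>k. {sample_family sig Z s h k -` A \<inter> space Pr |A. A \<in> sets borel}) (idx p)"
  proof (rule indep_sets_mono_sets[OF indep])
    fix k assume k: "k \<in> idx p"
    show "{sample_family sig Z s h k -` A \<inter> space Pr |A. A \<in> sets borel} \<subseteq>
      (case k of
          Inl m \<Rightarrow> {sig m -` A \<inter> space Pr | A. A \<subseteq> perms p}
        | Inr (u, m, n) \<Rightarrow> {Z u m n -` B \<inter> space Pr | B. B \<in> sets borel})"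
    proof (cases k)
      case (Inl m)
      then have m: "1 \<le> m"
        using k by (simp add: Inl_in_idx_iff)
      show ?thesis
        unfolding Inl sum.case sample_family_Inl
        by (rule preimages_subset_preimages[where \<phi>="\<lambda>A. {t \<in> perms p. (if t = s m then 1 else 0) \<in> A}"])
          (use sig_in_perms[OF m] in \<open>fastforce simp: perm_ind_def\<close>)
    next
      case (Inr a)
      then obtain u m n where a: "k = Inr (u, m, n)" by (cases a) auto
      show ?thesis
        unfolding a sum.case prod.case sample_family_Inr
        by (rule preimages_subset_preimages[where \<phi>="\<lambda>A. h (Inr (u, m, n)) -` A"])
          (auto intro: measurable_sets_borel[OF h])
    qed
  qed
qed

lemma sample_family_prod_has_integral:
  assumes h: "\<And>k. h k \<in> borel_measurable borel" and J: "finite J" "J \<subseteq> idx p"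
    and int: "\<And>k. k \<in> J \<Longrightarrow> integrable Pr (sample_family sig Z s h k)"
  shows "has_bochner_integral Pr (\<lambda>w. \<Prod>k\<in>J. sample_family sig Z s h k w)
    (\<Prod>k\<in>J. expectation (sample_family sig Z s h k))"
proof -
  have I: "indep_vars (\<lambda>_. borel) (sample_family sig Z s h) J"
    by (rule indep_vars_subset[OF sample_family_indep[OF h] J(2)])
  show ?thesis
    unfolding has_bochner_integral_iff
    using indep_vars_integrable[OF J(1) I int] indep_vars_lebesgue_integral[OF J(1) I int] by simp
qed

lemma Z_same_law:
  fixes g :: "real \<Rightarrow> real"
  assumes k: "Inr (u, m, n) \<in> idx p" and g: "g \<in> borel_measurable borel"
  shows "integrable Pr (\<lambda>w. g (Z u m n w)) \<longleftrightarrow> integrable Pr (\<lambda>w. g (Z u 1 1 w))"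
    and "expectation (\<lambda>w. g (Z u m n w)) = expectation (\<lambda>w. g (Z u 1 1 w))"
proof -
  have k1: "Inr (u, 1, 1) \<in> idx p"
    using k by (simp add: Inr_in_idx_iff)
  show "integrable Pr (\<lambda>w. g (Z u m n w)) \<longleftrightarrow> integrable Pr (\<lambda>w. g (Z u 1 1 w))"
    by (metis integrable_distr_eq[OF Z_rv[OF k] g] integrable_distr_eq[OF Z_rv[OF k1] g] Z_id[OF k])
  show "expectation (\<lambda>w. g (Z u m n w)) = expectation (\<lambda>w. g (Z u 1 1 w))"
    by (metis integral_distr[OF Z_rv[OF k] g] integral_distr[OF Z_rv[OF k1] g] Z_id[OF k])
qed

lemma Z_integrable:
  assumes k: "Inr (u, m, n) \<in> idx p"
  shows "integrable Pr (Z u m n)" "integrable Pr (\<lambda>w. (Z u m n w)\<^sup>2)"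
proof -
  have k1: "Inr (u, 1, 1) \<in> idx p"
    using k by (simp add: Inr_in_idx_iff)
  have sq: "integrable Pr (\<lambda>w. (Z u 1 1 w)\<^sup>2)"
    by (rule Z_L2[OF k1])
  then have "integrable Pr (Z u 1 1)"
    by (rule square_integrable_imp_integrable[OF Z_rv[OF k1]])
  then show "integrable Pr (Z u m n)"
    using Z_same_law(1)[OF k, of "\<lambda>x. x"] by simp
  show "integrable Pr (\<lambda>w. (Z u m n w)\<^sup>2)"
    using Z_same_law(1)[OF k, of "\<lambda>x. x\<^sup>2"] sq by simp
qed

definition nperms :: real where "nperms = real (card (perms p))"

lemma nperms_pos: "nperms > 0"
  using id_in_perms finite_perms by (auto simp: nperms_def card_gt_0_iff)

lemma perm_ind_has_integral:
  assumes m: "1 \<le> m" and s: "s \<in> perms p"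
  shows "has_bochner_integral Pr (perm_ind sig m s) (1 / nperms)"
proof -
  have "perm_ind sig m s = (\<lambda>w. indicator {s} (sig m w))"
    by (simp add: perm_ind_def fun_eq_iff)
  moreover have "integrable Pr (perm_ind sig m s)"
    by (rule integrable_const_bound[where B=1]) (auto simp: perm_ind_def perm_ind_measurable[OF m])
  moreover have "expectation (\<lambda>w. indicator {s} (sig m w)) =
      integral\<^sup>L (uniform_count_measure (perms p)) (indicator {s} :: _ \<Rightarrow> real)"
    by (subst sig_unif[OF m, symmetric], rule integral_distr[symmetric]) (simp_all add: sig_rv[OF m])
  ultimately show ?thesis
    using s finite_perms
    by (simp add: has_bochner_integral_iff measure_uniform_count_measure
        space_uniform_count_measure nperms_def)
qed

definition zmean :: "nat set \<Rightarrow> real" where "zmean u = expectation (sample p Z u 1 1)"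

definition zmoment2 :: "nat set \<Rightarrow> real" where
  "zmoment2 u = expectation (\<lambda>w. (sample p Z u 1 1 w)\<^sup>2)"

lemma sample_has_integral:
  assumes "1 \<le> m" "1 \<le> n"
  shows "has_bochner_integral Pr (sample p Z u m n) (zmean u)"
proof (cases "proper_set p u")
  case True
  then have k: "Inr (u, m, n) \<in> idx p"
    using assms by (simp add: Inr_in_idx_iff)
  show ?thesis
    using True Z_integrable(1)[OF k] Z_same_law(2)[OF k, of "\<lambda>x. x"]
    by (simp add: has_bochner_integral_iff zmean_def sample_def[abs_def])
qed (simp add: zmean_def sample_def[abs_def] has_bochner_integral_zero)

lemma sample_square_has_integral:
  assumes "1 \<le> m" "1 \<le> n"
  shows "has_bochner_integral Pr (\<lambda>w. (sample p Z u m n w)\<^sup>2) (zmoment2 u)"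
proof (cases "proper_set p u")
  case True
  then have k: "Inr (u, m, n) \<in> idx p"
    using assms by (simp add: Inr_in_idx_iff)
  show ?thesis
    using True Z_integrable(2)[OF k] Z_same_law(2)[OF k, of "\<lambda>x. x\<^sup>2"]
    by (simp add: has_bochner_integral_iff zmoment2_def sample_def)
qed (simp add: zmoment2_def sample_def has_bochner_integral_zero)

lemma sum_perm_ind:
  assumes "1 \<le> m" "w \<in> space Pr"
  shows "(\<Sum>s\<in>perms p. perm_ind sig m s w * F s) = F (sig m w)"
proof -
  have "(\<Sum>s\<in>perms p. perm_ind sig m s w * F s) = (\<Sum>s\<in>perms p. if sig m w = s then F s else 0)"
    by (intro sum.cong) (auto simp: perm_ind_def)
  then show ?thesis
    using finite_perms sig_in_perms[OF assms] by simp
qed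

lemma prod_ind_sample_has_integral:
  assumes Ms: "finite Ms" "\<And>m. m \<in> Ms \<Longrightarrow> 1 \<le> m" "\<And>m. m \<in> Ms \<Longrightarrow> s m \<in> perms p"
    and T: "finite T" "\<And>u m n. (u, m, n) \<in> T \<Longrightarrow> 1 \<le> m \<and> 1 \<le> n"
  shows "has_bochner_integral Pr
     (\<lambda>w. (\<Prod>m\<in>Ms. perm_ind sig m (s m) w) * (\<Prod>(u, m, n)\<in>T. sample p Z u m n w))
     ((1 / nperms) ^ card Ms * (\<Prod>(u, m, n)\<in>T. zmean u))"
proof (cases "\<exists>(u, m, n)\<in>T. \<not> proper_set p u")
  case True
  then obtain u m n where t: "(u, m, n) \<in> T" "\<not> proper_set p u"
    by auto
  have "(\<Prod>(u, m, n)\<in>T. zmean u) = 0"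
    using t T(1) by (intro prod_zero) (auto intro!: bexI[of _ "(u, m, n)"] simp: zmean_def sample_def[abs_def])
  moreover have "(\<Prod>(u, m, n)\<in>T. sample p Z u m n w) = 0" for w
    using t T(1) by (intro prod_zero) (auto intro!: bexI[of _ "(u, m, n)"] simp: sample_def)
  ultimately show ?thesis
    by (simp add: has_bochner_integral_zero)
next
  case False
  let ?h = "\<lambda>_ x. x :: real"
  let ?J = "Inl ` Ms \<union> Inr ` T"
  have proper: "\<And>u m n. (u, m, n) \<in> T \<Longrightarrow> proper_set p u"
    using False by auto
  have J: "finite ?J" "?J \<subseteq> idx p"
    using Ms T proper by (auto simp: Inr_in_idx_iff Inl_in_idx_iff)
  have moments: "has_bochner_integral Pr (sample_family sig Z s ?h k)
      (case k of Inl m \<Rightarrow> 1 / nperms | Inr (u, m, n) \<Rightarrow> zmean u)" if "k \<in> ?J" for k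
  proof (cases k)
    case (Inr t)
    moreover obtain u m n where "t = (u, m, n)"
      by (cases t) auto
    ultimately show ?thesis
      using that T proper sample_has_integral[of m n u] by (auto simp: sample_proper)
  qed (use that Ms perm_ind_has_integral in auto)
  have "has_bochner_integral Pr (\<lambda>w. \<Prod>k\<in>?J. sample_family sig Z s ?h k w)
      (\<Prod>k\<in>?J. expectation (sample_family sig Z s ?h k))"
    by (rule sample_family_prod_has_integral[OF _ J])
      (use moments in \<open>auto simp: has_bochner_integral_iff\<close>)
  moreover have "(\<Prod>k\<in>?J. expectation (sample_family sig Z s ?h k)) =
      (1 / nperms) ^ card Ms * (\<Prod>(u, m, n)\<in>T. zmean u)"
  proof -
    have "expectation (sample_family sig Z s ?h (Inl m)) = 1 / nperms" if "m \<in> Ms" for m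
      using moments[of "Inl m"] that by (simp add: has_bochner_integral_iff)
    moreover have "expectation (sample_family sig Z s ?h (Inr t)) = (case t of (u, m, n) \<Rightarrow> zmean u)"
      if "t \<in> T" for t
      using moments[of "Inr t"] that by (auto simp: has_bochner_integral_iff split: prod.splits)
    ultimately show ?thesis
      unfolding prod_Inl_Inr[OF Ms(1) T(1)] by (simp add: split_def)
  qed
  moreover have "(\<Prod>k\<in>?J. sample_family sig Z s ?h k w) =
      (\<Prod>m\<in>Ms. perm_ind sig m (s m) w) * (\<Prod>(u, m, n)\<in>T. sample p Z u m n w)" for w
    unfolding prod_Inl_Inr[OF Ms(1) T(1)]
    by (auto intro!: prod.cong arg_cong2[where f="(*)"] simp: sample_def proper)
  ultimately show ?thesis
    by simp
qed

lemma ind_sample_square_has_integral: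
  assumes m: "1 \<le> m" and n: "1 \<le> n" and s: "s \<in> perms p"
  shows "has_bochner_integral Pr (\<lambda>w. perm_ind sig m s w * (sample p Z u m n w)\<^sup>2) (zmoment2 u / nperms)"
proof (cases "proper_set p u")
  case True
  let ?h = "\<lambda>_ x. x\<^sup>2 :: real"
  let ?J = "{Inl m, Inr (u, m, n)}"
  have k: "Inr (u, m, n) \<in> idx p"
    using True m n by (simp add: Inr_in_idx_iff)
  have J: "finite ?J" "?J \<subseteq> idx p"
    using k m by (auto simp: Inl_in_idx_iff)
  have ind: "has_bochner_integral Pr (perm_ind sig m s) (1 / nperms)"
    by (rule perm_ind_has_integral[OF m s])
  have sq: "has_bochner_integral Pr (\<lambda>w. (Z u m n w)\<^sup>2) (zmoment2 u)"
    using sample_square_has_integral[OF m n, of u] True by (simp add: sample_proper)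
  have "has_bochner_integral Pr (\<lambda>w. \<Prod>k\<in>?J. sample_family sig Z (\<lambda>_. s) ?h k w)
      (\<Prod>k\<in>?J. expectation (sample_family sig Z (\<lambda>_. s) ?h k))"
    by (rule sample_family_prod_has_integral[OF _ J]) (use ind sq in \<open>auto simp: has_bochner_integral_iff\<close>)
  then show ?thesis
    using ind sq True by (simp add: sample_proper has_bochner_integral_iff divide_simps)
qed (simp add: zmoment2_def sample_def has_bochner_integral_zero)

lemma ind_sample_has_integral:
  assumes "1 \<le> m" "1 \<le> n" "s \<in> perms p"
  shows "has_bochner_integral Pr (\<lambda>w. perm_ind sig m s w * sample p Z u m n w) (zmean u / nperms)"
  using prod_ind_sample_has_integral[of "{m}" "\<lambda>_. s" "{(u, m, n)}"] assms by simp

lemma ind_sample_sample_has_integral: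
  assumes "1 \<le> m" "1 \<le> n" "1 \<le> n'" "s \<in> perms p"
  shows "has_bochner_integral Pr (\<lambda>w. perm_ind sig m s w * sample p Z u m n w * sample p Z u' m n' w)
     ((zmean u * zmean u' + (if u = u' \<and> n = n' then zmoment2 u - (zmean u)\<^sup>2 else 0)) / nperms)"
proof (cases "u = u' \<and> n = n'")
  case True
  then show ?thesis
    using ind_sample_square_has_integral[OF assms(1,2,4), of u] by (simp add: power2_eq_square mult.assoc)
next
  case False
  then have "has_bochner_integral Pr
     (\<lambda>w. (\<Prod>m\<in>{m}. perm_ind sig m s w) * (\<Prod>(u, m, n)\<in>{(u, m, n), (u', m, n')}. sample p Z u m n w))
     ((1 / nperms) ^ card {m} * (\<Prod>(u, m, n)\<in>{(u, m, n), (u', m, n')}. zmean u))"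
    by (intro prod_ind_sample_has_integral) (use assms in auto)
  then show ?thesis
    using False by (auto simp: mult.assoc)
qed

lemma ind_ind_has_integral:
  assumes "1 \<le> m" "1 \<le> m'" "m \<noteq> m'" "s \<in> perms p" "s' \<in> perms p"
  shows "has_bochner_integral Pr (\<lambda>w. perm_ind sig m s w * perm_ind sig m' s' w) (1 / nperms\<^sup>2)"
proof -
  have "has_bochner_integral Pr
     (\<lambda>w. (\<Prod>j\<in>{m, m'}. perm_ind sig j (if j = m then s else s') w) * (\<Prod>(u, m, n)\<in>{}. sample p Z u m n w))
     ((1 / nperms) ^ card {m, m'} * (\<Prod>(u, m :: nat, n :: nat)\<in>{}. zmean u))"
    by (rule prod_ind_sample_has_integral[where s="\<lambda>j. if j = m then s else s'"]) (use assms in auto)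
  then show ?thesis
    using assms by (simp add: power2_eq_square)
qed

lemma ind_sample_ind_has_integral:
  assumes "1 \<le> m" "1 \<le> m'" "m \<noteq> m'" "1 \<le> n" "s \<in> perms p" "s' \<in> perms p"
  shows "has_bochner_integral Pr (\<lambda>w. perm_ind sig m s w * sample p Z u m n w * perm_ind sig m' s' w)
     (zmean u / nperms\<^sup>2)"
proof -
  have "has_bochner_integral Pr
     (\<lambda>w. (\<Prod>j\<in>{m, m'}. perm_ind sig j (if j = m then s else s') w) * (\<Prod>(u, m, n)\<in>{(u, m, n)}. sample p Z u m n w))
     ((1 / nperms) ^ card {m, m'} * (\<Prod>(u, m, n)\<in>{(u, m, n)}. zmean u))"
    by (rule prod_ind_sample_has_integral[where s="\<lambda>j. if j = m then s else s'"]) (use assms in auto)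
  then show ?thesis
    using assms by (simp add: mult_ac power2_eq_square)
qed

lemma ind_sample_ind_sample_has_integral:
  assumes "1 \<le> m" "1 \<le> m'" "m \<noteq> m'" "1 \<le> n" "1 \<le> n'" "s \<in> perms p" "s' \<in> perms p"
  shows "has_bochner_integral Pr
     (\<lambda>w. perm_ind sig m s w * sample p Z u m n w * (perm_ind sig m' s' w * sample p Z u' m' n' w))
     (zmean u * zmean u' / nperms\<^sup>2)"
proof -
  have "has_bochner_integral Pr
     (\<lambda>w. (\<Prod>j\<in>{m, m'}. perm_ind sig j (if j = m then s else s') w) *
        (\<Prod>(u, m, n)\<in>{(u, m, n), (u', m', n')}. sample p Z u m n w))
     ((1 / nperms) ^ card {m, m'} * (\<Prod>(u, m, n)\<in>{(u, m, n), (u', m', n')}. zmean u))"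
    by (rule prod_ind_sample_has_integral[where s="\<lambda>j. if j = m then s else s'"]) (use assms in auto)
  then show ?thesis
    using assms by (simp add: mult_ac power2_eq_square)
qed

end

section \<open>Moments of the summands of the estimator\<close>

locale mc_estimator = mc_design +
  fixes i :: nat and VY :: real
  assumes i_in: "i \<in> {1..p}"
begin

definition exact_value :: "nat set \<Rightarrow> real" where
  "exact_value u = (if u = {1..p} then VY else 0)"

definition exact_incr :: "(nat \<Rightarrow> nat) \<Rightarrow> real" where
  "exact_incr s = exact_value (Pset i s \<union> {i}) - exact_value (Pset i s)"

definition mean_incr :: "(nat \<Rightarrow> nat) \<Rightarrow> real" where
  "mean_incr s = zmean (Pset i s \<union> {i}) - zmean (Pset i s)"

definition zvar :: "nat set \<Rightarrow> real" where
  "zvar u = zmoment2 u - (zmean u)\<^sup>2"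

definition incr_var :: "(nat \<Rightarrow> nat) \<Rightarrow> real" where
  "incr_var s = zvar (Pset i s \<union> {i}) + zvar (Pset i s)"

definition incr_sample :: "(nat \<Rightarrow> nat) \<Rightarrow> nat \<Rightarrow> nat \<Rightarrow> 'a \<Rightarrow> real" where
  "incr_sample s m n w = sample p Z (Pset i s \<union> {i}) m n w - sample p Z (Pset i s) m n w"

definition incr_estimate :: "nat \<Rightarrow> (nat \<Rightarrow> nat) \<Rightarrow> nat \<Rightarrow> 'a \<Rightarrow> real" where
  "incr_estimate N s m w = exact_incr s + 1 / real N * (\<Sum>n=1..N. incr_sample s m n w)"

definition summand :: "nat \<Rightarrow> nat \<Rightarrow> 'a \<Rightarrow> real" where
  "summand N m w = (\<Sum>s\<in>perms p. perm_ind sig m s w * incr_estimate N s m w)"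

lemma incr_sets_differ:
  assumes "s \<in> perms p"
  shows "Pset i s \<union> {i} \<noteq> Pset i s"
  using not_in_Pset[of s "{1..p}" i] assms by (auto simp: perms_def)

lemma What_eq_exact_plus_mean:
  assumes "u \<subseteq> {1..p}"
  shows "What p VY Z N u m w = exact_value u + 1 / real N * (\<Sum>n=1..N. sample p Z u m n w)"
  using assms i_in by (auto simp: What_def exact_value_def sample_def proper_set_def)

lemma eta_hat_eq_sum_summand:
  assumes w: "w \<in> space Pr"
  shows "eta_hat p VY sig Z i N M w = 1 / (real M * VY) * (\<Sum>m\<in>{1..M}. summand N m w)"
proof -
  have "What p VY Z N (Pset i (sig m w) \<union> {i}) m w - What p VY Z N (Pset i (sig m w)) m w = summand N m w"
    if m: "1 \<le> m" for m
  proof -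
    have s: "sig m w \<in> perms p"
      by (rule sig_in_perms[OF m w])
    then have "Pset i (sig m w) \<subseteq> {1..p}"
      using Pset_subset i_in by (simp add: perms_def)
    then show ?thesis
      unfolding summand_def sum_perm_ind[OF m w] using i_in
      by (simp add: What_eq_exact_plus_mean incr_estimate_def exact_incr_def incr_sample_def
          sum_subtractf algebra_simps)
  qed
  then show ?thesis
    unfolding eta_hat_def by (intro arg_cong2[where f="(*)"] refl sum.cong) auto
qed

lemma ind_incr_has_integral:
  assumes "1 \<le> m" "1 \<le> n" "s \<in> perms p"
  shows "has_bochner_integral Pr (\<lambda>w. perm_ind sig m s w * incr_sample s m n w) (mean_incr s / nperms)"
  by (rule has_bochner_integral_congI[OF has_bochner_integral_diff[OF
        ind_sample_has_integral[OF assms, of "Pset i s \<union> {i}"] ind_sample_has_integral[OF assms, of "Pset i s"]]])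
    (simp_all add: incr_sample_def mean_incr_def algebra_simps diff_divide_distrib)

lemma ind_incr_incr_has_integral:
  assumes "1 \<le> m" "1 \<le> n" "1 \<le> n'" "s \<in> perms p"
  shows "has_bochner_integral Pr (\<lambda>w. perm_ind sig m s w * incr_sample s m n w * incr_sample s m n' w)
    (if n = n' then ((mean_incr s)\<^sup>2 + incr_var s) / nperms else (mean_incr s)\<^sup>2 / nperms)"
proof -
  let ?U = "Pset i s \<union> {i}" and ?L = "Pset i s"
  note I = ind_sample_sample_has_integral[OF assms]
  show ?thesis
    by (rule has_bochner_integral_congI[OF has_bochner_integral_diff[OF
          has_bochner_integral_diff[OF I[of ?U ?U] I[of ?U ?L]] has_bochner_integral_diff[OF I[of ?L ?U] I[of ?L ?L]]]])
      (simp add: incr_sample_def algebra_simps,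
       use incr_sets_differ[OF assms(4)] in \<open>simp add: mean_incr_def incr_var_def zvar_def
         diff_divide_distrib add_divide_distrib power2_eq_square algebra_simps\<close>)
qed

lemma ind_incr_ind_has_integral:
  assumes "1 \<le> m" "1 \<le> m'" "m \<noteq> m'" "1 \<le> n" "s \<in> perms p" "s' \<in> perms p"
  shows "has_bochner_integral Pr (\<lambda>w. perm_ind sig m s w * incr_sample s m n w * perm_ind sig m' s' w)
    (mean_incr s / nperms\<^sup>2)"
  by (rule has_bochner_integral_congI[OF has_bochner_integral_diff[OF
        ind_sample_ind_has_integral[OF assms, of "Pset i s \<union> {i}"]
        ind_sample_ind_has_integral[OF assms, of "Pset i s"]]])
    (simp_all add: incr_sample_def mean_incr_def algebra_simps diff_divide_distrib)

lemma ind_incr_ind_incr_has_integral: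
  assumes "1 \<le> m" "1 \<le> m'" "m \<noteq> m'" "1 \<le> n" "1 \<le> n'" "s \<in> perms p" "s' \<in> perms p"
  shows "has_bochner_integral Pr
    (\<lambda>w. perm_ind sig m s w * incr_sample s m n w * (perm_ind sig m' s' w * incr_sample s' m' n' w))
    (mean_incr s * mean_incr s' / nperms\<^sup>2)"
proof -
  let ?U = "Pset i s \<union> {i}" and ?L = "Pset i s" and ?U' = "Pset i s' \<union> {i}" and ?L' = "Pset i s'"
  note I = ind_sample_ind_sample_has_integral[OF assms]
  show ?thesis
    by (rule has_bochner_integral_congI[OF has_bochner_integral_diff[OF
          has_bochner_integral_diff[OF I[of ?U ?U'] I[of ?U ?L']]
          has_bochner_integral_diff[OF I[of ?L ?U'] I[of ?L ?L']]]])
      (simp add: incr_sample_def algebra_simps, use nperms_pos in \<open>simp add: mean_incr_def field_simps\<close>)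
qed

lemma ind_estimate_has_integral:
  assumes N: "1 \<le> N" and m: "1 \<le> m" and s: "s \<in> perms p"
  shows "has_bochner_integral Pr (\<lambda>w. perm_ind sig m s w * incr_estimate N s m w)
    ((exact_incr s + mean_incr s) / nperms)"
proof -
  have "has_bochner_integral Pr
      (\<lambda>w. exact_incr s * perm_ind sig m s w + 1 / real N * (\<Sum>n\<in>{1..N}. perm_ind sig m s w * incr_sample s m n w))
      (exact_incr s * (1 / nperms) + 1 / real N * (\<Sum>n\<in>{1..N}. mean_incr s / nperms))"
    by (intro has_bochner_integral_add has_bochner_integral_mult_right has_bochner_integral_sum
        perm_ind_has_integral ind_incr_has_integral m s) auto
  then show ?thesis
    by (rule has_bochner_integral_congI)
      (simp add: incr_estimate_def algebra_simps sum_distrib_left, use N nperms_pos in \<open>simp add: field_simps\<close>)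
qed

lemma ind_estimate_square_expand:
  "perm_ind sig m s w * (incr_estimate N s m w)\<^sup>2 =
     (exact_incr s)\<^sup>2 * perm_ind sig m s w
     + 2 * exact_incr s / real N * (\<Sum>n\<in>{1..N}. perm_ind sig m s w * incr_sample s m n w)
     + 1 / (real N)\<^sup>2 * (\<Sum>n\<in>{1..N}. \<Sum>n'\<in>{1..N}. perm_ind sig m s w * incr_sample s m n w * incr_sample s m n' w)"
  by (simp add: incr_estimate_def power2_eq_square algebra_simps sum_distrib_left sum_product)

lemma ind_estimate_product_expand:
  "perm_ind sig m s w * incr_estimate N s m w * (perm_ind sig m' s' w * incr_estimate N s' m' w) =
     exact_incr s * exact_incr s' * (perm_ind sig m s w * perm_ind sig m' s' w)
     + exact_incr s / real N * (\<Sum>n\<in>{1..N}. perm_ind sig m' s' w * incr_sample s' m' n w * perm_ind sig m s w)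
     + exact_incr s' / real N * (\<Sum>n\<in>{1..N}. perm_ind sig m s w * incr_sample s m n w * perm_ind sig m' s' w)
     + 1 / (real N)\<^sup>2 * (\<Sum>n\<in>{1..N}. \<Sum>n'\<in>{1..N}.
          perm_ind sig m s w * incr_sample s m n w * (perm_ind sig m' s' w * incr_sample s' m' n' w))"
proof -
  have "(\<Sum>n\<in>{1..N}. \<Sum>n'\<in>{1..N}.
        perm_ind sig m s w * incr_sample s m n w * (perm_ind sig m' s' w * incr_sample s' m' n' w)) =
      (\<Sum>n\<in>{1..N}. perm_ind sig m s w * incr_sample s m n w) *
      (\<Sum>n'\<in>{1..N}. perm_ind sig m' s' w * incr_sample s' m' n' w)"
    by (simp add: sum_product)
  then show ?thesis
    by (simp add: incr_estimate_def power2_eq_square algebra_simps sum_distrib_left)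
qed

lemma ind_estimate_product_has_integral:
  assumes N: "1 \<le> N" and m: "1 \<le> m" "1 \<le> m'" "m \<noteq> m'" and s: "s \<in> perms p" "s' \<in> perms p"
  shows "has_bochner_integral Pr
    (\<lambda>w. perm_ind sig m s w * incr_estimate N s m w * (perm_ind sig m' s' w * incr_estimate N s' m' w))
    ((exact_incr s + mean_incr s) / nperms * ((exact_incr s' + mean_incr s') / nperms))"
proof -
  have "m' \<noteq> m"
    using m by simp
  then have "has_bochner_integral Pr
      (\<lambda>w. exact_incr s * exact_incr s' * (perm_ind sig m s w * perm_ind sig m' s' w)
        + exact_incr s / real N * (\<Sum>n\<in>{1..N}. perm_ind sig m' s' w * incr_sample s' m' n w * perm_ind sig m s w)
        + exact_incr s' / real N * (\<Sum>n\<in>{1..N}. perm_ind sig m s w * incr_sample s m n w * perm_ind sig m' s' w)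
        + 1 / (real N)\<^sup>2 * (\<Sum>n\<in>{1..N}. \<Sum>n'\<in>{1..N}.
            perm_ind sig m s w * incr_sample s m n w * (perm_ind sig m' s' w * incr_sample s' m' n' w)))
      (exact_incr s * exact_incr s' * (1 / nperms\<^sup>2)
        + exact_incr s / real N * (\<Sum>n\<in>{1..N}. mean_incr s' / nperms\<^sup>2)
        + exact_incr s' / real N * (\<Sum>n\<in>{1..N}. mean_incr s / nperms\<^sup>2)
        + 1 / (real N)\<^sup>2 * (\<Sum>n\<in>{1..N}. \<Sum>n'\<in>{1..N}. mean_incr s * mean_incr s' / nperms\<^sup>2))"
    by (intro has_bochner_integral_add has_bochner_integral_mult_right has_bochner_integral_sum
        ind_ind_has_integral ind_incr_ind_has_integral ind_incr_ind_incr_has_integral m s) auto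
  then show ?thesis
    by (rule has_bochner_integral_congI)
      (simp only: ind_estimate_product_expand, use N nperms_pos in \<open>simp add: field_simps power2_eq_square\<close>)
qed

definition summand_mean :: real where
  "summand_mean = (\<Sum>s\<in>perms p. (exact_incr s + mean_incr s) / nperms)"

definition summand_moment2 :: "nat \<Rightarrow> real" where
  "summand_moment2 N = (\<Sum>s\<in>perms p. ((exact_incr s + mean_incr s)\<^sup>2 + incr_var s / real N) / nperms)"

lemma summand_has_integral:
  assumes "1 \<le> N" "1 \<le> m"
  shows "has_bochner_integral Pr (summand N m) summand_mean"
  unfolding summand_def[abs_def] summand_mean_def
  by (intro has_bochner_integral_sum ind_estimate_has_integral assms)

lemma summand_square_eq:
  assumes "1 \<le> m" "w \<in> space Pr"
  shows "(summand N m w)\<^sup>2 = (\<Sum>s\<in>perms p. perm_ind sig m s w * (incr_estimate N s m w)\<^sup>2)"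
  by (simp add: summand_def sum_perm_ind[OF assms])

lemma summand_square_has_integral:
  assumes N: "1 \<le> N" and m: "1 \<le> m"
  shows "has_bochner_integral Pr (\<lambda>w. (summand N m w)\<^sup>2) (summand_moment2 N)"
proof -
  have "has_bochner_integral Pr
      (\<lambda>w. \<Sum>s\<in>perms p. (exact_incr s)\<^sup>2 * perm_ind sig m s w
        + 2 * exact_incr s / real N * (\<Sum>n\<in>{1..N}. perm_ind sig m s w * incr_sample s m n w)
        + 1 / (real N)\<^sup>2 * (\<Sum>n\<in>{1..N}. \<Sum>n'\<in>{1..N}.
            perm_ind sig m s w * incr_sample s m n w * incr_sample s m n' w))
      (\<Sum>s\<in>perms p. (exact_incr s)\<^sup>2 * (1 / nperms)
        + 2 * exact_incr s / real N * (\<Sum>n\<in>{1..N}. mean_incr s / nperms)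
        + 1 / (real N)\<^sup>2 * (\<Sum>n\<in>{1..N}. \<Sum>n'\<in>{1..N}.
            if n = n' then ((mean_incr s)\<^sup>2 + incr_var s) / nperms else (mean_incr s)\<^sup>2 / nperms))"
    by (intro has_bochner_integral_sum has_bochner_integral_add has_bochner_integral_mult_right
        perm_ind_has_integral ind_incr_has_integral ind_incr_incr_has_integral m) auto
  then show ?thesis
    by (rule has_bochner_integral_congI)
      (simp only: summand_square_eq[OF m] ind_estimate_square_expand,
       unfold summand_moment2_def sum_sum_if_eq[OF finite_atLeastAtMost],
       use N nperms_pos in \<open>intro sum.cong refl; simp add: field_simps power2_eq_square\<close>)
qed

lemma summand_product_has_integral:
  assumes N: "1 \<le> N" and m: "1 \<le> m" "1 \<le> m'"
  shows "has_bochner_integral Pr (\<lambda>w. summand N m w * summand N m' w)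
    (if m = m' then summand_moment2 N else summand_mean\<^sup>2)"
proof (cases "m = m'")
  case True
  then show ?thesis
    using summand_square_has_integral[OF N m(1)] by (simp add: power2_eq_square)
next
  case False
  have "has_bochner_integral Pr
      (\<lambda>w. \<Sum>s\<in>perms p. \<Sum>s'\<in>perms p.
        perm_ind sig m s w * incr_estimate N s m w * (perm_ind sig m' s' w * incr_estimate N s' m' w))
      (\<Sum>s\<in>perms p. \<Sum>s'\<in>perms p.
        (exact_incr s + mean_incr s) / nperms * ((exact_incr s' + mean_incr s') / nperms))"
    by (intro has_bochner_integral_sum ind_estimate_product_has_integral N m False)
  then show ?thesis
    by (rule has_bochner_integral_congI)
      (simp_all add: False summand_def summand_mean_def sum_product power2_eq_square)
qed

definition incr_mean_square :: real where
  "incr_mean_square = (\<Sum>s\<in>perms p. (exact_incr s + mean_incr s)\<^sup>2 / nperms)"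

definition mean_incr_var :: real where
  "mean_incr_var = (\<Sum>s\<in>perms p. incr_var s / nperms)"

lemma summand_moment2_eq: "summand_moment2 N = incr_mean_square + mean_incr_var / real N"
  unfolding summand_moment2_def incr_mean_square_def mean_incr_var_def
  by (simp add: add_divide_distrib sum.distrib sum_divide_distrib ac_simps)

lemma summand_mean_square_le: "summand_mean\<^sup>2 \<le> incr_mean_square"
proof -
  let ?x = "\<lambda>s. exact_incr s + mean_incr s"
  have "(\<Sum>s\<in>perms p. ?x s)\<^sup>2 \<le> (\<Sum>s\<in>perms p. (?x s)\<^sup>2) * nperms"
    unfolding nperms_def by (rule sum_squared_le_sum_of_squares)
  then show ?thesis
    using nperms_pos
    by (simp add: summand_mean_def incr_mean_square_def power_divide field_simps power2_eq_square
        flip: sum_divide_distrib)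
qed

lemma eta_hat_variance:
  assumes "1 \<le> N" "1 \<le> M"
  shows "variance (eta_hat p VY sig Z i N M) =
    (1 / (real M * VY))\<^sup>2 * real M * (incr_mean_square - summand_mean\<^sup>2 + mean_incr_var / real N)"
proof -
  have "variance (eta_hat p VY sig Z i N M) =
      (1 / (real M * VY))\<^sup>2 * card {1..M} * (summand_moment2 N - summand_mean\<^sup>2)"
    using assms
    by (intro variance_scaled_sum_uncorrelated[where D="summand N"] eta_hat_eq_sum_summand
        summand_has_integral summand_product_has_integral) auto
  then show ?thesis
    by (simp add: summand_moment2_eq)
qed

end

theorem proposition6:
  fixes p i C :: nat
    and Q :: "'b measure" and X :: "'b \<Rightarrow> nat \<Rightarrow> real" and f :: "(nat \<Rightarrow> real) \<Rightarrow> real"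
    and W :: "nat set \<Rightarrow> real"
    and Pr :: "'a measure" and sig :: "nat \<Rightarrow> 'a \<Rightarrow> (nat \<Rightarrow> nat)"
    and Z :: "nat set \<Rightarrow> nat \<Rightarrow> nat \<Rightarrow> 'a \<Rightarrow> real"
  assumes i: "i \<in> {1..p}"
    and C: "1 \<le> C"
    \<comment> \<open>the model: X random vector, Y = f(X) in L^2, Var(Y) > 0\<close>
    and Q: "prob_space Q"
    and X: "X \<in> Q \<rightarrow>\<^sub>M PiM {1..p} (\<lambda>_. borel)"
    and f: "f \<in> borel_measurable (PiM {1..p} (\<lambda>_. borel))"
    and fL2: "integrable Q (\<lambda>w. (f (X w))^2)"
    and VarY: "prob_space.variance Q (Yof f X) > 0"
    \<comment> \<open>W_u is V_u for all u, or E_u for all u\<close>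
    and W: "W = Vu Q X f \<or> W = Eu p Q X f"
    \<comment> \<open>the Monte-Carlo samples\<close>
    and Pr: "prob_space Pr"
    and sig_rv: "\<And>m. 1 \<le> m \<Longrightarrow> sig m \<in> Pr \<rightarrow>\<^sub>M count_space (perms p)"
    and sig_unif: "\<And>m. 1 \<le> m \<Longrightarrow>
       distr Pr (count_space (perms p)) (sig m) = uniform_count_measure (perms p)"
    and Z_rv: "\<And>u m n. (Inr (u, m, n)) \<in> idx p \<Longrightarrow> Z u m n \<in> borel_measurable Pr"
    and Z_id: "\<And>u m n. (Inr (u, m, n)) \<in> idx p \<Longrightarrow>
       distr Pr borel (Z u m n) = distr Pr borel (Z u 1 1)"
    and Z_L2: "\<And>u. (Inr (u, 1, 1)) \<in> idx p \<Longrightarrow> integrable Pr (\<lambda>w. (Z u 1 1 w)^2)"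
    and Z_unbiased: "\<And>u. (Inr (u, 1, 1)) \<in> idx p \<Longrightarrow>
       prob_space.expectation Pr (Z u 1 1) = W u"
    and indep: "prob_space.indep_sets Pr
       (\<lambda>k. case k of
          Inl m \<Rightarrow> {sig m -` A \<inter> space Pr | A. A \<subseteq> perms p}
        | Inr (u, m, n) \<Rightarrow> {Z u m n -` B \<inter> space Pr | B. B \<in> sets borel})
       (idx p)"
  shows "\<forall>N M. 1 \<le> N \<and> 1 \<le> M \<and> M * N = C \<longrightarrow>
     prob_space.variance Pr (eta_hat p (prob_space.variance Q (Yof f X)) sig Z i 1 C)
       \<le> prob_space.variance Pr (eta_hat p (prob_space.variance Q (Yof f X)) sig Z i N M)"
proof (intro allI impI, elim conjE)
  fix N M assume N: "1 \<le> N" and M: "1 \<le> M" and cost: "M * N = C"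
  let ?VY = "prob_space.variance Q (Yof f X)"
  interpret mc_estimator Pr p sig Z i ?VY
    using Pr sig_rv sig_unif Z_rv Z_id Z_L2 indep i
    by (auto intro!: mc_estimator.intro mc_design.intro mc_design_axioms.intro mc_estimator_axioms.intro)
  have "0 \<le> incr_mean_square - summand_mean\<^sup>2"
    using summand_mean_square_le by simp
  then show "variance (eta_hat p ?VY sig Z i 1 C) \<le> variance (eta_hat p ?VY sig Z i N M)"
    unfolding eta_hat_variance[OF order_refl C] eta_hat_variance[OF N M]
    using cost_constrained_variance_le[OF _ N cost, where B = mean_incr_var and v = ?VY] by simp
qed

end
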